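(* The local complexity of the class of unit-distance graphs is $\Omega(n)$.
   Context: A unit-distance graph is a graph whose vertices are points in the plane, two points being adjacent iff their Euclidean distance equals 1. All graphs are finite, simple, connected; $n$ is the number of vertices, with distinct identifiers in $\{1,\dots,\mathrm{poly}(n)\}$. A proof labeling scheme for a class $\mathcal{G}$ consists of a prover assigning a certificate (binary word) to each vertex of each $G\in\mathcal{G}$ and a local verifier where each vertex accepts or rejects based only on identifiers and certificates in its closed neighborhood; all vertices accept when $G\in\mathcal{G}$ with the prover's certificates, and when $G\notin\mathcal{G}$ some vertex rejects for every certificate assignment. The local complexity of $\mathcal{G}$ is the minimum, over such schemes, of the maximum certificate length used on $n$-vertex graphs of $\mathcal{G}$. *)

theory Defs
  imports "HOL-Analysis.Analysis"
begin

text \<open>A graph with identifiers: the vertices are their own (distinct) identifiers,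
  i.e. a finite set V of natural numbers together with an edge relation E.\<close>

definition simple_graph :: "nat set \<Rightarrow> (nat \<Rightarrow> nat \<Rightarrow> bool) \<Rightarrow> bool" where
  "simple_graph V E \<longleftrightarrow> finite V \<and> V \<noteq> {} \<and>
     (\<forall>u v. E u v \<longrightarrow> u \<in> V \<and> v \<in> V) \<and>
     (\<forall>u v. E u v \<longrightarrow> E v u) \<and> (\<forall>v. \<not> E v v)"

definition connected_graph :: "nat set \<Rightarrow> (nat \<Rightarrow> nat \<Rightarrow> bool) \<Rightarrow> bool" where
  "connected_graph V E \<longleftrightarrow> (\<forall>u\<in>V. \<forall>v\<in>V. E\<^sup>*\<^sup>* u v)"

definition admissible :: "nat \<Rightarrow> nat set \<Rightarrow> (nat \<Rightarrow> nat \<Rightarrow> bool) \<Rightarrow> bool" where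
  "admissible k V E \<longleftrightarrow> simple_graph V E \<and> connected_graph V E \<and>
     V \<subseteq> {1..card V ^ k}"

definition unit_distance_graph :: "nat set \<Rightarrow> (nat \<Rightarrow> nat \<Rightarrow> bool) \<Rightarrow> bool" where
  "unit_distance_graph V E \<longleftrightarrow>
     (\<exists>p :: nat \<Rightarrow> real^2. inj_on p V \<and>
        (\<forall>u\<in>V. \<forall>v\<in>V. E u v \<longleftrightarrow> dist (p u) (p v) = 1))"

type_synonym verifier = "nat \<Rightarrow> bool list \<Rightarrow> (nat \<times> bool list) set \<Rightarrow> bool"
type_synonym prover = "nat set \<Rightarrow> (nat \<Rightarrow> nat \<Rightarrow> bool) \<Rightarrow> nat \<Rightarrow> bool list"

definition accepts :: "verifier \<Rightarrow> (nat \<Rightarrow> nat \<Rightarrow> bool) \<Rightarrow> (nat \<Rightarrow> bool list) \<Rightarrow> nat \<Rightarrow> bool" where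
  "accepts D E c v \<longleftrightarrow> D v (c v) {(u, c u) | u. E v u}"

definition pls_unit_distance :: "nat \<Rightarrow> verifier \<Rightarrow> prover \<Rightarrow> bool" where
  "pls_unit_distance k D P \<longleftrightarrow>
     (\<forall>V E. admissible k V E \<longrightarrow> unit_distance_graph V E \<longrightarrow>
        (\<forall>v\<in>V. accepts D E (P V E) v)) \<and>
     (\<forall>V E. admissible k V E \<longrightarrow> \<not> unit_distance_graph V E \<longrightarrow>
        (\<forall>c. \<exists>v\<in>V. \<not> accepts D E c v))"

end

theory Submission
  imports Defs
begin

(*
  Fooling sets built from rigid pieces of the triangular lattice.  For X \<subseteq> {0..<m} the graph
  H(X, X) consists of two triangulated strips joined by a two-column connector; for every i < m
  each strip carries a triangle gadget whose orientation records whether i \<in> X.  Being an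
  induced subgraph of the triangular lattice, H(X, X) is a unit-distance graph.  Splicing the
  lower half of H(X, X) with the upper half of H(Y, Y) along the four middle connector vertices
  gives H(X, Y); for i \<in> X - Y, rigidity of triangulated strips forces the apexes of the two
  gadgets of i onto the same point, so H(X, Y) is not a unit-distance graph.  As the verifier
  is local, the prover's certificates of H(X, X) and H(Y, Y) must therefore differ on the four
  border vertices whenever X \<noteq> Y.  Certificates of length at most n/100 admit fewer than
  2^(4(n/100 + 1)) \<le> 2^m such restrictions, so two of the 2^m graphs H(X, X) would collide.
*)

lemma accepts_splice:
  assumes "\<And>v u. v \<in> A \<Longrightarrow> E v u \<longleftrightarrow> E1 v u"
    and "\<And>v u. v \<notin> A \<Longrightarrow> E v u \<longleftrightarrow> E2 v u"
    and "\<And>v u. E v u \<Longrightarrow> (v \<in> A) \<noteq> (u \<in> A) \<Longrightarrow> c1 u = c2 u"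
  shows "accepts D E (\<lambda>u. if u \<in> A then c1 u else c2 u) v \<longleftrightarrow>
           (if v \<in> A then accepts D E1 c1 v else accepts D E2 c2 v)"
proof (cases "v \<in> A")
  case True
  have "{(u, if u \<in> A then c1 u else c2 u) | u. E v u} = {(u, c1 u) | u. E1 v u}"
    using assms(1)[OF True] assms(3)[of v] True by force
  then show ?thesis using True by (simp add: accepts_def)
next
  case False
  have "{(u, if u \<in> A then c1 u else c2 u) | u. E v u} = {(u, c2 u) | u. E2 v u}"
    using assms(2)[OF False] assms(3)[of v] False by force
  then show ?thesis using False by (simp add: accepts_def)
qed

lemma pls_crossing_certificates_differ:
  assumes pls: "pls_unit_distance k D P"
    and E1: "admissible k V E1" "unit_distance_graph V E1"
    and E2: "admissible k V E2" "unit_distance_graph V E2"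
    and E: "admissible k V E" "\<not> unit_distance_graph V E"
    and side_A: "\<And>v u. v \<in> A \<Longrightarrow> E v u \<longleftrightarrow> E1 v u"
    and side_B: "\<And>v u. v \<notin> A \<Longrightarrow> E v u \<longleftrightarrow> E2 v u"
  shows "\<exists>v u. E v u \<and> (v \<in> A) \<noteq> (u \<in> A) \<and> P V E1 u \<noteq> P V E2 u"
proof (rule ccontr)
  assume "\<not> ?thesis"
  then have border: "\<And>v u. E v u \<Longrightarrow> (v \<in> A) \<noteq> (u \<in> A) \<Longrightarrow> P V E1 u = P V E2 u"
    by blast
  have "accepts D E1 (P V E1) v" "accepts D E2 (P V E2) v" if "v \<in> V" for v
    using pls E1 E2 that unfolding pls_unit_distance_def by blast+
  then have "accepts D E (\<lambda>u. if u \<in> A then P V E1 u else P V E2 u) v" if "v \<in> V" for v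
    using accepts_splice[OF side_A side_B border] that by simp
  moreover have "\<exists>v\<in>V. \<not> accepts D E c v" for c
    using pls E unfolding pls_unit_distance_def by blast
  ultimately show False by blast
qed

lemma rtranclp_chain:
  assumes "\<And>j. j < N \<Longrightarrow> R (f (Suc j)) (f j)" "j \<le> N"
  shows "R\<^sup>*\<^sup>* (f j) (f 0)"
  using assms(2)
proof (induction j)
  case (Suc j)
  then show ?case
    using assms(1) by (meson Suc_le_lessD converse_rtranclp_into_rtranclp less_imp_le_nat)
qed simp

definition pullback :: "nat set \<Rightarrow> (nat \<Rightarrow> 'a) \<Rightarrow> ('a \<Rightarrow> 'a \<Rightarrow> bool) \<Rightarrow> nat \<Rightarrow> nat \<Rightarrow> bool" where
  "pullback V h R u v \<longleftrightarrow> u \<in> V \<and> v \<in> V \<and> R (h u) (h v)"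

lemma simple_graph_pullback:
  assumes "finite V" "V \<noteq> {}" "symp R" "\<And>r. \<not> R r r"
  shows "simple_graph V (pullback V h R)"
  using assms unfolding simple_graph_def pullback_def by (auto dest: sympD)

lemma connected_graph_pullback:
  assumes h: "bij_betw h V S" and "symp R" and "hub \<in> S"
    and reach: "\<And>r. r \<in> S \<Longrightarrow> (\<lambda>a b. a \<in> S \<and> b \<in> S \<and> R a b)\<^sup>*\<^sup>* r hub"
  shows "connected_graph V (pullback V h R)"
proof -
  define g where "g = inv_into V h"
  have g: "g r \<in> V" "h (g r) = r" if "r \<in> S" for r
    using h that unfolding g_def by (auto simp: bij_betw_def inv_into_into f_inv_into_f)
  have to_hub: "(pullback V h R)\<^sup>*\<^sup>* (g r) (g hub)" if "r \<in> S" for r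
    using reach[OF that]
  proof (induction rule: converse_rtranclp_induct)
    case (step a b)
    then have "pullback V h R (g a) (g b)" using g unfolding pullback_def by auto
    then show ?case using step.IH by (rule converse_rtranclp_into_rtranclp)
  qed simp
  have "symp (pullback V h R)"
    using \<open>symp R\<close> unfolding pullback_def symp_def by blast
  then have "(pullback V h R)\<^sup>*\<^sup>* (g hub) (g r)" if "r \<in> S" for r
    using to_hub[OF that] by (simp add: symp_rtranclp [THEN sympD])
  moreover have "u = g (h u)" if "u \<in> V" for u
    using h that unfolding g_def by (simp add: bij_betw_def)
  ultimately show ?thesis
    unfolding connected_graph_def using to_hub h
    by (metis (no_types, lifting) bij_betwE rtranclp_trans)
qed

lemma unit_distance_graph_pullback:
  assumes h: "bij_betw h V S"
  shows "unit_distance_graph V (pullback V h R) \<longleftrightarrow>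
    (\<exists>q :: 'a \<Rightarrow> real^2. inj_on q S \<and> (\<forall>a\<in>S. \<forall>b\<in>S. R a b \<longleftrightarrow> dist (q a) (q b) = 1))"
proof
  assume "unit_distance_graph V (pullback V h R)"
  then obtain p :: "nat \<Rightarrow> real^2" where p: "inj_on p V"
    "\<forall>u\<in>V. \<forall>v\<in>V. pullback V h R u v \<longleftrightarrow> dist (p u) (p v) = 1"
    unfolding unit_distance_graph_def by blast
  define g where "g = inv_into V h"
  have g: "bij_betw g S V" "\<And>a. a \<in> S \<Longrightarrow> h (g a) = a"
    using h unfolding g_def by (auto simp: bij_betw_inv_into bij_betw_inv_into_right)
  then have "inj_on (p \<circ> g) S"
    using p(1) by (simp add: bij_betw_def comp_inj_on)
  moreover have "R a b \<longleftrightarrow> dist ((p \<circ> g) a) ((p \<circ> g) b) = 1" if "a \<in> S" "b \<in> S" for a b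
    using p(2) g(2)[OF that(1)] g(2)[OF that(2)] bij_betwE[OF g(1)] that
    unfolding pullback_def by force
  ultimately show "\<exists>q :: 'a \<Rightarrow> real^2. inj_on q S \<and> (\<forall>a\<in>S. \<forall>b\<in>S. R a b \<longleftrightarrow> dist (q a) (q b) = 1)"
    by blast
next
  assume "\<exists>q :: 'a \<Rightarrow> real^2. inj_on q S \<and> (\<forall>a\<in>S. \<forall>b\<in>S. R a b \<longleftrightarrow> dist (q a) (q b) = 1)"
  then obtain q :: "'a \<Rightarrow> real^2" where q: "inj_on q S" "\<forall>a\<in>S. \<forall>b\<in>S. R a b \<longleftrightarrow> dist (q a) (q b) = 1"
    by blast
  have "inj_on (q \<circ> h) V"
    using h q(1) by (simp add: bij_betw_def comp_inj_on)
  moreover have "\<forall>u\<in>V. \<forall>v\<in>V. pullback V h R u v \<longleftrightarrow> dist ((q \<circ> h) u) ((q \<circ> h) v) = 1"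
    using h q(2) unfolding pullback_def by (simp add: bij_betwE)
  ultimately show "unit_distance_graph V (pullback V h R)"
    unfolding unit_distance_graph_def by blast
qed

lemma admissible_pullback:
  assumes "k \<ge> 1" and h: "bij_betw h {1..n} S" and "symp R" "\<And>r. \<not> R r r" "hub \<in> S"
    and "\<And>r. r \<in> S \<Longrightarrow> (\<lambda>a b. a \<in> S \<and> b \<in> S \<and> R a b)\<^sup>*\<^sup>* r hub"
  shows "admissible k {1..n} (pullback {1..n} h R)"
proof -
  have "{1..n} \<noteq> {}"
    using h \<open>hub \<in> S\<close> unfolding bij_betw_def by blast
  then have "n \<ge> 1"
    by simp
  then have "{1..n} \<subseteq> {1..card {1..n} ^ k}"
    using \<open>k \<ge> 1\<close> by (simp add: self_le_power)
  moreover have "simple_graph {1..n} (pullback {1..n} h R)"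
    using \<open>n \<ge> 1\<close> assms(3,4) by (intro simple_graph_pullback) auto
  moreover have "connected_graph {1..n} (pullback {1..n} h R)"
    using assms(2,3,5,6) by (rule connected_graph_pullback)
  ultimately show ?thesis
    unfolding admissible_def by blast
qed

lemma card_bool_lists_le: "card {xs :: bool list. length xs \<le> L} < 2 ^ Suc L"
proof -
  have "card {xs :: bool list. length xs \<le> L} = (\<Sum>i\<le>L. 2 ^ i)"
    using card_lists_length_le[of "UNIV :: bool set" L] by simp
  also have "\<dots> < 2 ^ Suc L"
    by (induction L) auto
  finally show ?thesis .
qed

lemma short_words_on_subsets_collide:
  fixes c :: "'a set \<Rightarrow> 'b \<Rightarrow> bool list"
  assumes "finite M" "finite B" "B \<noteq> {}" "card B * Suc L \<le> card M"
    and short: "\<And>X u. X \<subseteq> M \<Longrightarrow> u \<in> B \<Longrightarrow> length (c X u) \<le> L"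
  shows "\<exists>X Y. X \<subseteq> M \<and> Y \<subseteq> M \<and> X \<noteq> Y \<and> (\<forall>u\<in>B. c X u = c Y u)"
proof (rule ccontr)
  define W where "W = {xs :: bool list. length xs \<le> L}"
  assume "\<not> ?thesis"
  then have "inj_on (\<lambda>X. restrict (c X) B) (Pow M)"
    unfolding inj_on_def by (metis PowD restrict_apply')
  moreover have "(\<lambda>X. restrict (c X) B) ` Pow M \<subseteq> B \<rightarrow>\<^sub>E W"
    using short unfolding W_def by auto
  moreover have "finite W"
    using finite_lists_length_le[of "UNIV :: bool set" L] by (simp add: W_def)
  ultimately have "card (Pow M) \<le> card (B \<rightarrow>\<^sub>E W)"
    using \<open>finite B\<close> by (intro card_inj_on_le) (auto simp: finite_PiE)
  also have "\<dots> = card W ^ card B"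
    using \<open>finite B\<close> by (simp add: card_PiE)
  also have "\<dots> < (2 ^ Suc L) ^ card B"
    using card_bool_lists_le \<open>finite B\<close> \<open>B \<noteq> {}\<close> unfolding W_def
    by (intro power_strict_mono) auto
  also have "\<dots> = 2 ^ (Suc L * card B)"
    by (rule power_mult[symmetric])
  also have "\<dots> \<le> 2 ^ card M"
    using assms(4) by (intro power_increasing) (simp_all add: mult.commute)
  finally show False
    using \<open>finite M\<close> by (simp add: card_Pow)
qed

lemma dist_vec2_squared:
  fixes x y :: "real^2"
  shows "(dist x y)\<^sup>2 = (x$1 - y$1)\<^sup>2 + (x$2 - y$2)\<^sup>2"
  by (simp add: dist_vec_def L2_set_def sum_2 dist_real_def)

lemma unit_triangle_reflection:
  fixes a b c x :: "real^2"
  assumes "dist a b = 1" "dist a c = 1" "dist b c = 1" "dist x b = 1" "dist x c = 1"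
  shows "x = a \<or> x = b + c - a"
proof -
  obtain a1 a2 b1 b2 c1 c2 x1 x2 where coords: "a$1 = a1" "a$2 = a2" "b$1 = b1" "b$2 = b2"
    "c$1 = c1" "c$2 = c2" "x$1 = x1" "x$2 = x2"
    by blast
  have "(u$1 - v$1)\<^sup>2 + (u$2 - v$2)\<^sup>2 = 1" if "dist u v = 1" for u v :: "real^2"
    using dist_vec2_squared[of u v] that by simp
  note h = this[OF assms(1)] this[OF assms(2)] this[OF assms(3)] this[OF assms(4)] this[OF assms(5)]
  note h = h[unfolded coords]
  have "(x1 - a1) * (x1 - (b1 + c1 - a1)) = 0" "(x1 - a1) * (x2 - (b2 + c2 - a2)) = 0"
    "(x2 - a2) * (x1 - (b1 + c1 - a1)) = 0" "(x2 - a2) * (x2 - (b2 + c2 - a2)) = 0"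
    using h by algebra+
  then have "(x$1 = a$1 \<and> x$2 = a$2) \<or> (x$1 = (b + c - a)$1 \<and> x$2 = (b + c - a)$2)"
    unfolding coords vector_add_component vector_minus_component by (metis mult_eq_0_iff right_minus_eq)
  then show ?thesis
    unfolding vec_eq_iff forall_2 by blast
qed

definition tri_adj :: "int \<times> int \<Rightarrow> int \<times> int \<Rightarrow> bool" where
  "tri_adj z w \<longleftrightarrow> z - w \<in> {(1, 0), (-1, 0), (0, 1), (0, -1), (1, -1), (-1, 1)}"

lemma tri_adj_sym: "tri_adj z w \<longleftrightarrow> tri_adj w z"
proof -
  have "- d \<in> {(1, 0), (-1, 0), (0, 1), (0, -1), (1, -1), (-1, 1)} \<longleftrightarrow>
      d \<in> {(1, 0), (-1, 0), (0, 1), (0, -1), (1, -1), (-1, 1)}" for d :: "int \<times> int"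
    by (cases d) auto
  then show ?thesis
    unfolding tri_adj_def by (metis minus_diff_eq)
qed

lemma tri_adj_irrefl: "\<not> tri_adj z z"
  by (simp add: tri_adj_def zero_prod_def)

lemma tri_adj_Pair [simp]:
  "tri_adj (a, b) (c, d) \<longleftrightarrow> (a - c, b - d) \<in> {(1, 0), (-1, 0), (0, 1), (0, -1), (1, -1), (-1, 1)}"
  by (simp add: tri_adj_def)

lemma eisenstein_norm_eq_1:
  fixes a b :: int
  shows "a\<^sup>2 + a * b + b\<^sup>2 = 1 \<longleftrightarrow> (a, b) \<in> {(1, 0), (-1, 0), (0, 1), (0, -1), (1, -1), (-1, 1)}"
proof
  assume norm: "a\<^sup>2 + a * b + b\<^sup>2 = 1"
  have "4 = (2 * a + b)\<^sup>2 + 3 * b\<^sup>2" "4 = (2 * b + a)\<^sup>2 + 3 * a\<^sup>2"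
    using norm by algebra+
  then have "a\<^sup>2 \<le> 1" "b\<^sup>2 \<le> 1"
    using zero_le_power2[of "2 * a + b"] zero_le_power2[of "2 * b + a"] by linarith+
  then have "a = -1 \<or> a = 0 \<or> a = 1" "b = -1 \<or> b = 0 \<or> b = 1"
    unfolding abs_square_le_1 by auto
  then show "(a, b) \<in> {(1, 0), (-1, 0), (0, 1), (0, -1), (1, -1), (-1, 1)}"
    using norm by (elim disjE) simp_all
qed auto

lemma eisenstein_norm_eq_0:
  fixes a b :: int
  shows "a\<^sup>2 + a * b + b\<^sup>2 = 0 \<longleftrightarrow> a = 0 \<and> b = 0"
proof
  assume "a\<^sup>2 + a * b + b\<^sup>2 = 0"
  then have "0 = (2 * a + b)\<^sup>2 + 3 * b\<^sup>2" "0 = (2 * b + a)\<^sup>2 + 3 * a\<^sup>2"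
    by algebra+
  then have "a\<^sup>2 \<le> 0" "b\<^sup>2 \<le> 0"
    using zero_le_power2[of "2 * a + b"] zero_le_power2[of "2 * b + a"] by linarith+
  then show "a = 0 \<and> b = 0"
    by simp
qed simp

definition tri_point :: "int \<times> int \<Rightarrow> real^2" where
  "tri_point z = vector [of_int (fst z) + of_int (snd z) / 2, of_int (snd z) * sqrt 3 / 2]"

lemma dist_tri_point_squared:
  assumes ab: "z - w = (a, b)"
  shows "(dist (tri_point z) (tri_point w))\<^sup>2 = of_int (a\<^sup>2 + a * b + b\<^sup>2)"
proof -
  have "tri_point z $ 1 - tri_point w $ 1 = of_int a + of_int b / 2"
    "tri_point z $ 2 - tri_point w $ 2 = of_int b * sqrt 3 / 2"
    using ab by (cases z; cases w; simp add: tri_point_def field_simps)+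
  then have "(dist (tri_point z) (tri_point w))\<^sup>2 = (of_int a + of_int b / 2)\<^sup>2 + (of_int b * sqrt 3 / 2)\<^sup>2"
    unfolding dist_vec2_squared by (simp only:)
  also have "\<dots> = of_int (a\<^sup>2 + a * b + b\<^sup>2)"
    by (simp add: power2_eq_square algebra_simps)
  finally show ?thesis .
qed

lemma dist_tri_point_eq_1: "dist (tri_point z) (tri_point w) = 1 \<longleftrightarrow> tri_adj z w"
proof -
  obtain a b where ab: "z - w = (a, b)" by fastforce
  have "dist (tri_point z) (tri_point w) = 1 \<longleftrightarrow> (dist (tri_point z) (tri_point w))\<^sup>2 = 1"
    by (metis power2_eq_iff_nonneg zero_le_dist zero_le_one one_power2)
  also have "\<dots> \<longleftrightarrow> tri_adj z w"
    unfolding dist_tri_point_squared[OF ab] of_int_eq_1_iff eisenstein_norm_eq_1 tri_adj_def ab ..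
  finally show ?thesis .
qed

lemma inj_tri_point: "inj tri_point"
proof (rule injI)
  fix z w assume eq: "tri_point z = tri_point w"
  obtain a b where ab: "z - w = (a, b)" by fastforce
  with eq have "real_of_int (a\<^sup>2 + a * b + b\<^sup>2) = 0"
    using dist_tri_point_squared[OF ab] by simp
  then have "a\<^sup>2 + a * b + b\<^sup>2 = 0"
    by (simp only: of_int_eq_0_iff)
  then show "z = w"
    using ab unfolding eisenstein_norm_eq_0 by (simp add: zero_prod_def[symmetric])
qed

definition tri_strip :: "nat \<Rightarrow> (nat \<Rightarrow> int \<times> int) \<Rightarrow> bool" where
  "tri_strip N z \<longleftrightarrow>
     (\<forall>j. Suc j < N \<longrightarrow> tri_adj (z j) (z (Suc j))) \<and>
     (\<forall>j. Suc (Suc j) < N \<longrightarrow> tri_adj (z j) (z (Suc (Suc j)))) \<and>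
     (\<forall>j. Suc (Suc (Suc j)) < N \<longrightarrow> z (Suc (Suc (Suc j))) = z (Suc j) + z (Suc (Suc j)) - z j)"

lemma tri_strip_row: "tri_strip N (\<lambda>j. (int (j div 2), r + int (j mod 2)))"
  unfolding tri_strip_def tri_adj_def
proof (intro conjI allI impI)
  fix j
  show "(int (j div 2), r + int (j mod 2)) - (int (Suc j div 2), r + int (Suc j mod 2))
      \<in> {(1, 0), (-1, 0), (0, 1), (0, -1), (1, -1), (-1, 1)}"
    by (cases "even j") (auto elim!: evenE oddE)
  show "(int (j div 2), r + int (j mod 2)) - (int (Suc (Suc j) div 2), r + int (Suc (Suc j) mod 2))
      \<in> {(1, 0), (-1, 0), (0, 1), (0, -1), (1, -1), (-1, 1)}"
    by (cases "even j") (auto elim!: evenE oddE)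
  show "(int (Suc (Suc (Suc j)) div 2), r + int (Suc (Suc (Suc j)) mod 2)) =
      (int (Suc j div 2), r + int (Suc j mod 2)) + (int (Suc (Suc j) div 2), r + int (Suc (Suc j) mod 2))
      - (int (j div 2), r + int (j mod 2))"
    by (cases "even j") (auto elim!: evenE oddE)
qed

lemma tri_strip_column: "tri_strip N (\<lambda>j. (int (j mod 2), int (j div 2)))"
  unfolding tri_strip_def tri_adj_def
proof (intro conjI allI impI)
  fix j
  show "(int (j mod 2), int (j div 2)) - (int (Suc j mod 2), int (Suc j div 2))
      \<in> {(1, 0), (-1, 0), (0, 1), (0, -1), (1, -1), (-1, 1)}"
    by (cases "even j") (auto elim!: evenE oddE)
  show "(int (j mod 2), int (j div 2)) - (int (Suc (Suc j) mod 2), int (Suc (Suc j) div 2))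
      \<in> {(1, 0), (-1, 0), (0, 1), (0, -1), (1, -1), (-1, 1)}"
    by (cases "even j") (auto elim!: evenE oddE)
  show "(int (Suc (Suc (Suc j)) mod 2), int (Suc (Suc (Suc j)) div 2)) =
      (int (Suc j mod 2), int (Suc j div 2)) + (int (Suc (Suc j) mod 2), int (Suc (Suc j) div 2))
      - (int (j mod 2), int (j div 2))"
    by (cases "even j") (auto elim!: evenE oddE)
qed

(*
  Gadget A i is a unit triangle on columns 2i + 4, 2i + 5 of the lower strip, pointing up into
  rows 2-3 if i \<in> X and down otherwise; gadget B i, on columns 2i + 3, 2i + 4 of the upper
  strip, points down into rows 4-3 if i \<notin> Y and up otherwise.  The two apexes (index 2)
  coincide, at (2i + 4, 3), exactly when i \<in> X - Y.
*)
datatype role = is_frame: Frame "int \<times> int" | GadgetA nat nat | GadgetB nat nat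

fun pos :: "nat set \<Rightarrow> nat set \<Rightarrow> role \<Rightarrow> int \<times> int" where
  "pos X Y (Frame z) = z"
| "pos X Y (GadgetA i s) = (2 * int i + 4, 0) +
     (if i \<in> X then [(0, 2), (1, 2), (0, 3)] else [(0, -1), (1, -1), (1, -2)]) ! s"
| "pos X Y (GadgetB i s) = (2 * int i + 4, 0) +
     (if i \<in> Y then [(0, 7), (-1, 7), (-1, 8)] else [(0, 4), (-1, 4), (0, 3)]) ! s"

fun side_A :: "role \<Rightarrow> bool" where
  "side_A (Frame z) \<longleftrightarrow> snd z \<le> 2"
| "side_A (GadgetA i s) \<longleftrightarrow> True"
| "side_A (GadgetB i s) \<longleftrightarrow> False"

(*
  Strips in rows 0-1 and 5-6, a connector in columns 0-1, and a tail of T cells that pads the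
  number of vertices to exactly n.
*)
definition frame_cells :: "nat \<Rightarrow> nat \<Rightarrow> (int \<times> int) set" where
  "frame_cells m T = {0..2 * int m + 3} \<times> {0, 1, 5, 6} \<union> {0..1} \<times> {2..4} \<union> {- int T..-1} \<times> {0}"

definition roles :: "nat \<Rightarrow> nat \<Rightarrow> role set" where
  "roles m T = Frame ` frame_cells m T \<union> case_prod GadgetA ` ({..<m} \<times> {..<3})
     \<union> case_prod GadgetB ` ({..<m} \<times> {..<3})"

lemma mem_roles [simp]:
  "Frame z \<in> roles m T \<longleftrightarrow> z \<in> frame_cells m T"
  "GadgetA i s \<in> roles m T \<longleftrightarrow> i < m \<and> s < 3"
  "GadgetB i s \<in> roles m T \<longleftrightarrow> i < m \<and> s < 3"
  unfolding roles_def by auto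

lemma card_frame_cells: "card (frame_cells m T) = 8 * m + 22 + T"
proof -
  have "card ({0..2 * int m + 3} \<times> {0::int, 1, 5, 6} \<union> {0..1} \<times> {2..4}) = 4 * (2 * m + 4) + 6"
    by (subst card_Un_disjoint) (auto simp: card_cartesian_product)
  then show ?thesis
    unfolding frame_cells_def by (subst card_Un_disjoint) (auto simp: card_cartesian_product)
qed

lemma card_roles: "card (roles m T) = 14 * m + 22 + T"
proof -
  have fin: "finite (frame_cells m T)"
    unfolding frame_cells_def by auto
  have "inj (case_prod GadgetA)" "inj (case_prod GadgetB)"
    by (auto intro: injI)
  then have "card (case_prod GadgetA ` ({..<m} \<times> {..<3})) = 3 * m"
    "card (case_prod GadgetB ` ({..<m} \<times> {..<3})) = 3 * m"
    by (simp_all add: card_image inj_on_subset card_cartesian_product)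
  moreover have "card (Frame ` frame_cells m T) = 8 * m + 22 + T"
    using card_image[of Frame "frame_cells m T"] by (simp add: inj_on_def card_frame_cells)
  ultimately show ?thesis
    unfolding roles_def using fin by (subst card_Un_disjoint; auto)+
qed

lemma finite_roles: "finite (roles m T)"
  unfolding roles_def frame_cells_def by auto

(*
  The graph H(X, Y): side A (frame rows \<le> 2 and the gadgets A) is drawn according to X,
  side B according to Y, and edges between the sides are kept only between frame vertices.
  Hence H(X, Y) agrees with H(X, X) around side A and with H(Y, Y) around side B.
*)
definition framework :: "nat set \<Rightarrow> nat set \<Rightarrow> role \<Rightarrow> role \<Rightarrow> bool" where
  "framework X Y r r' \<longleftrightarrow> tri_adj (pos X Y r) (pos X Y r') \<and>
     (side_A r = side_A r' \<or> is_frame r \<and> is_frame r')"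

abbreviation framework_on :: "nat \<Rightarrow> nat \<Rightarrow> nat set \<Rightarrow> nat set \<Rightarrow> role \<Rightarrow> role \<Rightarrow> bool" where
  "framework_on m T X Y a b \<equiv> a \<in> roles m T \<and> b \<in> roles m T \<and> framework X Y a b"

lemma framework_sym: "framework X Y r r' \<longleftrightarrow> framework X Y r' r"
  unfolding framework_def using tri_adj_sym by blast

lemma framework_irrefl: "\<not> framework X Y r r"
  unfolding framework_def using tri_adj_irrefl by blast

lemma framework_Frame [simp]: "framework X Y (Frame z) (Frame w) \<longleftrightarrow> tri_adj z w"
  unfolding framework_def by simp

lemma framework_side_A: "side_A r \<Longrightarrow> framework X Y r r' \<longleftrightarrow> framework X X r r'"
  and framework_side_B: "\<not> side_A r \<Longrightarrow> framework X Y r r' \<longleftrightarrow> framework Y Y r r'"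
  unfolding framework_def by (cases r; cases r'; simp)+

definition border :: "role set" where
  "border = Frame ` ({0, 1} \<times> {2, 3})"

lemma framework_cross_edge_border:
  assumes "r' \<in> roles m T" "framework X Y r r'" "side_A r \<noteq> side_A r'"
  shows "r' \<in> border"
proof -
  obtain z z' where frames: "r = Frame z" "r' = Frame z'"
    using assms(2,3) unfolding framework_def by (auto simp: role.is_frame_def)
  have "snd z' \<in> {2, 3}"
    using assms(2,3) unfolding frames by (cases z; cases z') (auto simp: tri_adj_def)
  moreover have "z' \<in> frame_cells m T"
    using assms(1) frames by simp
  ultimately show ?thesis
    unfolding border_def frames frame_cells_def by (cases z') auto
qed

lemma less_3_iff: "s < (3::nat) \<longleftrightarrow> s = 0 \<or> s = 1 \<or> s = 2"
  by auto

lemma inj_on_pos_diagonal: "inj_on (pos X X) (roles m T)"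
proof (rule inj_onI)
  fix r r' assume "r \<in> roles m T" "r' \<in> roles m T" "pos X X r = pos X X r'"
  then show "r = r'"
    by (cases r; cases r') (auto simp: less_3_iff frame_cells_def split: if_splits, presburger+)
qed

lemma frame_A_not_adj_gadget_B:
  "z \<in> frame_cells m T \<Longrightarrow> snd z \<le> 2 \<Longrightarrow> t < 3 \<Longrightarrow> \<not> tri_adj z (pos X Y (GadgetB j t))"
  unfolding less_3_iff by (cases z; cases "j \<in> Y") (auto simp: frame_cells_def)

lemma gadget_A_not_adj_frame_B:
  "z \<in> frame_cells m T \<Longrightarrow> \<not> snd z \<le> 2 \<Longrightarrow> s < 3 \<Longrightarrow> \<not> tri_adj (pos X Y (GadgetA i s)) z"
  unfolding less_3_iff by (cases z; cases "i \<in> X") (auto simp: frame_cells_def)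

lemma gadget_A_not_adj_gadget_B:
  "s < 3 \<Longrightarrow> t < 3 \<Longrightarrow> \<not> tri_adj (pos X X (GadgetA i s)) (pos X X (GadgetB j t))"
  unfolding less_3_iff by (cases "i \<in> X"; cases "j \<in> X") (auto, presburger+)

lemma framework_diagonal:
  assumes "r \<in> roles m T" "r' \<in> roles m T"
  shows "framework X X r r' \<longleftrightarrow> tri_adj (pos X X r) (pos X X r')"
proof -
  have frames: "is_frame a \<and> is_frame b"
    if "a \<in> roles m T" "b \<in> roles m T" "side_A a" "\<not> side_A b" "tri_adj (pos X X a) (pos X X b)"
    for a b
    using that frame_A_not_adj_gadget_B gadget_A_not_adj_frame_B gadget_A_not_adj_gadget_B
    by (cases a; cases b) auto
  show ?thesis
    using frames[of r r'] frames[of r' r] assms tri_adj_sym unfolding framework_def by metis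
qed

lemma framework_diagonal_realisation:
  "\<exists>q :: role \<Rightarrow> real^2. inj_on q (roles m T) \<and>
     (\<forall>r\<in>roles m T. \<forall>r'\<in>roles m T. framework X X r r' \<longleftrightarrow> dist (q r) (q r') = 1)"
proof (intro exI conjI)
  show "inj_on (tri_point \<circ> pos X X) (roles m T)"
    using inj_on_pos_diagonal inj_tri_point by (blast intro: comp_inj_on inj_on_subset)
  show "\<forall>r\<in>roles m T. \<forall>r'\<in>roles m T. framework X X r r' \<longleftrightarrow>
      dist ((tri_point \<circ> pos X X) r) ((tri_point \<circ> pos X X) r') = 1"
    by (simp add: framework_diagonal dist_tri_point_eq_1)
qed

lemma strip_reaches_start:
  assumes "tri_strip N z" "\<And>j. j < N \<Longrightarrow> z j \<in> frame_cells m T" "j < N"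
  shows "(framework_on m T X Y)\<^sup>*\<^sup>* (Frame (z j)) (Frame (z 0))"
proof (rule rtranclp_chain[where N = "N - 1"])
  fix i assume "i < N - 1"
  then show "framework_on m T X Y (Frame (z (Suc i))) (Frame (z i))"
    using assms(1,2) tri_adj_sym unfolding tri_strip_def by auto
qed (use assms(3) in simp)

lemma strip_row_reaches_start:
  assumes "r \<in> {0, 5}" "c \<in> {0, 1}" "0 \<le> a" "a \<le> 2 * int m + 3"
  shows "(framework_on m T X Y)\<^sup>*\<^sup>* (Frame (a, r + c)) (Frame (0, r))"
proof -
  let ?row = "\<lambda>j. (int (j div 2), r + int (j mod 2))"
  have "(framework_on m T X Y)\<^sup>*\<^sup>* (Frame (?row (2 * nat a + nat c))) (Frame (?row 0))"
    by (rule strip_reaches_start[OF tri_strip_row, where N = "4 * m + 8"])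
      (use assms in \<open>auto simp: frame_cells_def\<close>)
  then show ?thesis
    using assms by auto
qed

lemma connector_reaches_origin:
  assumes "0 \<le> c" "c \<le> 1" "0 \<le> r" "r \<le> 6"
  shows "(framework_on m T X Y)\<^sup>*\<^sup>* (Frame (c, r)) (Frame (0, 0))"
proof -
  let ?column = "\<lambda>j. (int (j mod 2), int (j div 2))"
  have "(framework_on m T X Y)\<^sup>*\<^sup>* (Frame (?column (2 * nat r + nat c))) (Frame (?column 0))"
    by (rule strip_reaches_start[OF tri_strip_column, where N = 14])
      (use assms in \<open>auto simp: frame_cells_def\<close>)
  then show ?thesis
    using assms by auto
qed

lemma frame_reaches_origin:
  assumes "z \<in> frame_cells m T"
  shows "(framework_on m T X Y)\<^sup>*\<^sup>* (Frame z) (Frame (0, 0))"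
proof -
  obtain a b where z: "z = (a, b)" by fastforce
  have tail_path: "(framework_on m T X Y)\<^sup>*\<^sup>* (Frame (- int t, 0)) (Frame (0, 0))" if "t \<le> T" for t
    by (rule rtranclp_chain[where f = "\<lambda>t. Frame (- int t, 0)" and N = T, simplified])
      (use that in \<open>auto simp: frame_cells_def tri_adj_def\<close>)
  consider (lower) "b \<in> {0, 1}" "0 \<le> a" "a \<le> 2 * int m + 3"
    | (upper) "b \<in> {5, 6}" "0 \<le> a" "a \<le> 2 * int m + 3"
    | (connector) "0 \<le> a" "a \<le> 1" "0 \<le> b" "b \<le> 6"
    | (tail) "- int T \<le> a" "a \<le> -1" "b = 0"
    using assms unfolding z frame_cells_def by auto
  then show ?thesis
  proof cases
    case lower
    then show ?thesis using strip_row_reaches_start[of 0 b] z by simp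
  next
    case upper
    then have "(framework_on m T X Y)\<^sup>*\<^sup>* (Frame z) (Frame (0, 5))"
      using strip_row_reaches_start[of 5 "b - 5"] z by simp
    moreover have "(framework_on m T X Y)\<^sup>*\<^sup>* (Frame (0, 5)) (Frame (0, 0))"
      by (rule connector_reaches_origin) simp_all
    ultimately show ?thesis
      by (rule rtranclp_trans)
  next
    case connector
    then show ?thesis using connector_reaches_origin[of a b] z by simp
  next
    case tail
    then show ?thesis using tail_path[of "nat (- a)"] z by simp
  qed
qed

lemma gadget_A_reaches_origin:
  assumes "i < m" "s < 3"
  shows "(framework_on m T X Y)\<^sup>*\<^sup>* (GadgetA i s) (Frame (0, 0))"
proof -
  have foot: "(framework_on m T X Y)\<^sup>*\<^sup>* (GadgetA i t) (Frame (0, 0))" if "t < 2" for t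
  proof -
    let ?z = "pos X Y (GadgetA i t) + (if i \<in> X then (0, -1) else (0, 1))"
    have z: "?z \<in> frame_cells m T" and "framework X Y (GadgetA i t) (Frame ?z)"
      using that assms(1) less_2_cases[OF that]
      by (auto simp: frame_cells_def framework_def)
    then have "framework_on m T X Y (GadgetA i t) (Frame ?z)"
      using assms(1) that by simp
    then show ?thesis
      using frame_reaches_origin[OF z] by (rule converse_rtranclp_into_rtranclp)
  qed
  have "framework_on m T X Y (GadgetA i 2) (GadgetA i (if i \<in> X then 0 else 1))"
    using assms(1) by (simp add: framework_def)
  moreover have "(framework_on m T X Y)\<^sup>*\<^sup>* (GadgetA i (if i \<in> X then 0 else 1)) (Frame (0, 0))"
    by (rule foot) simp
  ultimately have "(framework_on m T X Y)\<^sup>*\<^sup>* (GadgetA i 2) (Frame (0, 0))"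
    by (rule converse_rtranclp_into_rtranclp)
  then show ?thesis
    using foot assms(2) less_3_iff by fastforce
qed

lemma gadget_B_reaches_origin:
  assumes "i < m" "s < 3"
  shows "(framework_on m T X Y)\<^sup>*\<^sup>* (GadgetB i s) (Frame (0, 0))"
proof -
  have foot: "(framework_on m T X Y)\<^sup>*\<^sup>* (GadgetB i t) (Frame (0, 0))" if "t < 2" for t
  proof -
    let ?z = "pos X Y (GadgetB i t) + (if i \<in> Y then (0, -1) else (0, 1))"
    have z: "?z \<in> frame_cells m T" and "framework X Y (GadgetB i t) (Frame ?z)"
      using that assms(1) less_2_cases[OF that]
      by (auto simp: frame_cells_def framework_def)
    then have "framework_on m T X Y (GadgetB i t) (Frame ?z)"
      using assms(1) that by simp
    then show ?thesis
      using frame_reaches_origin[OF z] by (rule converse_rtranclp_into_rtranclp)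
  qed
  have "framework_on m T X Y (GadgetB i 2) (GadgetB i (if i \<in> Y then 1 else 0))"
    using assms(1) by (simp add: framework_def)
  moreover have "(framework_on m T X Y)\<^sup>*\<^sup>* (GadgetB i (if i \<in> Y then 1 else 0)) (Frame (0, 0))"
    by (rule foot) simp
  ultimately have "(framework_on m T X Y)\<^sup>*\<^sup>* (GadgetB i 2) (Frame (0, 0))"
    by (rule converse_rtranclp_into_rtranclp)
  then show ?thesis
    using foot assms(2) less_3_iff by fastforce
qed

lemma framework_connected:
  "r \<in> roles m T \<Longrightarrow> (framework_on m T X Y)\<^sup>*\<^sup>* r (Frame (0, 0))"
  by (cases r) (auto intro: frame_reaches_origin gadget_A_reaches_origin gadget_B_reaches_origin)

locale unit_realisation =
  fixes m T :: nat and X Y :: "nat set" and p :: "role \<Rightarrow> real^2"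
  assumes inj: "inj_on p (roles m T)"
    and unit: "\<And>r r'. framework_on m T X Y r r' \<Longrightarrow> dist (p r) (p r') = 1"
begin

(*
  The affine map fixed by the images of (0, 0), (1, 0) and (0, 1).  Reflecting unit triangles
  across their edges propagates agreement with it along every triangulated strip.
*)
definition lattice_map :: "int \<times> int \<Rightarrow> real^2" where
  "lattice_map z = p (Frame (0, 0)) + of_int (fst z) *\<^sub>R (p (Frame (1, 0)) - p (Frame (0, 0)))
     + of_int (snd z) *\<^sub>R (p (Frame (0, 1)) - p (Frame (0, 0)))"

definition on_lattice :: "role \<Rightarrow> bool" where
  "on_lattice r \<longleftrightarrow> p r = lattice_map (pos X Y r)"

lemma lattice_map_reflect: "lattice_map (b + c - a) = lattice_map b + lattice_map c - lattice_map a"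
  by (cases a; cases b; cases c) (simp add: lattice_map_def algebra_simps)

lemma on_lattice_reflect:
  assumes "framework_on m T X Y v b" "framework_on m T X Y v c"
    and "framework_on m T X Y a b" "framework_on m T X Y a c" "framework_on m T X Y b c"
    and "on_lattice a" "on_lattice b" "on_lattice c"
    and "pos X Y v = pos X Y b + pos X Y c - pos X Y a"
  shows "on_lattice v"
proof (cases "p v = p a")
  case True
  then have "v = a"
    using inj assms(1,3) by (meson inj_onD)
  then show ?thesis
    using assms(6) by simp
next
  case False
  have "dist (p a) (p b) = 1" "dist (p a) (p c) = 1" "dist (p b) (p c) = 1"
    "dist (p v) (p b) = 1" "dist (p v) (p c) = 1"
    using unit assms(1-5) by blast+
  then have "p v = p b + p c - p a"
    using unit_triangle_reflection False by blast
  then show ?thesis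
    using assms(6-9) unfolding on_lattice_def by (simp add: lattice_map_reflect)
qed

lemma on_lattice_strip:
  assumes strip: "tri_strip N z" and cells: "\<And>j. j < N \<Longrightarrow> z j \<in> frame_cells m T"
    and start: "\<And>j. j < 3 \<Longrightarrow> on_lattice (Frame (z j))"
  shows "j < N \<Longrightarrow> on_lattice (Frame (z j))"
proof (induction j rule: less_induct)
  case (less j)
  show ?case
  proof (cases "j < 3")
    case False
    define i where "i = j - 3"
    have j: "j = Suc (Suc (Suc i))"
      using False unfolding i_def by simp
    have adj1: "tri_adj (z k) (z (Suc k))" if "Suc k < N" for k
      using strip that unfolding tri_strip_def by blast
    have adj2: "tri_adj (z k) (z (Suc (Suc k)))" if "Suc (Suc k) < N" for k
      using strip that unfolding tri_strip_def by blast
    let ?F = "\<lambda>k. Frame (z k)"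
    have cell: "z k \<in> frame_cells m T" if "k \<le> j" for k
      using cells less.prems that by simp
    have edge: "framework_on m T X Y (?F k) (?F l)" if "tri_adj (z k) (z l)" "k \<le> j" "l \<le> j" for k l
      using cell that by simp
    have "z j = z (Suc i) + z (Suc (Suc i)) - z i"
      using strip less.prems unfolding tri_strip_def j by blast
    then have pos: "pos X Y (?F j) = pos X Y (?F (Suc i)) + pos X Y (?F (Suc (Suc i))) - pos X Y (?F i)"
      by simp
    have adj: "tri_adj (z j) (z (Suc i))" "tri_adj (z j) (z (Suc (Suc i)))"
      "tri_adj (z i) (z (Suc i))" "tri_adj (z i) (z (Suc (Suc i)))" "tri_adj (z (Suc i)) (z (Suc (Suc i)))"
      using adj1[of i] adj1[of "Suc i"] adj1[of "Suc (Suc i)"] adj2[of i] adj2[of "Suc i"] less.prems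
        tri_adj_sym
      unfolding j by (metis Suc_lessD)+
    have edges: "framework_on m T X Y (?F j) (?F (Suc i))" "framework_on m T X Y (?F j) (?F (Suc (Suc i)))"
      "framework_on m T X Y (?F i) (?F (Suc i))" "framework_on m T X Y (?F i) (?F (Suc (Suc i)))"
      "framework_on m T X Y (?F (Suc i)) (?F (Suc (Suc i)))"
      by (rule edge[OF adj(1)] edge[OF adj(2)] edge[OF adj(3)] edge[OF adj(4)] edge[OF adj(5)];
          simp add: j)+
    have "on_lattice (?F i)" "on_lattice (?F (Suc i))" "on_lattice (?F (Suc (Suc i)))"
      using less.IH less.prems unfolding j by simp_all
    then show ?thesis
      by (rule on_lattice_reflect[OF edges _ _ _ pos])
  qed (use start in auto)
qed

lemma frame_rows_on_lattice:
  assumes "0 \<le> a" "a \<le> 2 * int m + 3" "b \<in> {0, 1, 5, 6}"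
  shows "on_lattice (Frame (a, b))"
proof -
  have origin: "on_lattice (Frame (0, 0))" "on_lattice (Frame (1, 0))" "on_lattice (Frame (0, 1))"
    by (simp_all add: on_lattice_def lattice_map_def)
  have column: "on_lattice (Frame (int (j mod 2), int (j div 2)))" if "j < 14" for j
    by (rule on_lattice_strip[OF tri_strip_column, where N = 14])
      (use that origin in \<open>auto simp: frame_cells_def less_3_iff\<close>)
  have row: "on_lattice (Frame (int (j div 2), r + int (j mod 2)))"
    if "j < 4 * m + 8" "r \<in> {0, 5}" for j r
  proof (rule on_lattice_strip[OF tri_strip_row, where N = "4 * m + 8"])
    show "(int (k div 2), r + int (k mod 2)) \<in> frame_cells m T" if "k < 4 * m + 8" for k
      using that \<open>r \<in> {0, 5}\<close> by (auto simp: frame_cells_def)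
    show "on_lattice (Frame (int (k div 2), r + int (k mod 2)))" if "k < 3" for k
      using that \<open>r \<in> {0, 5}\<close> origin column[of 10] column[of 11] column[of 12]
      by (auto simp: less_3_iff)
  qed (rule that(1))
  consider (lower) "b \<in> {0, 1}" | (upper) "b \<in> {5, 6}"
    using assms(3) by blast
  then show ?thesis
  proof cases
    case lower
    then show ?thesis
      using row[of "2 * nat a + nat b" 0] assms(1,2) by auto
  next
    case upper
    then show ?thesis
      using row[of "2 * nat a + nat (b - 5)" 5] assms(1,2) by auto
  qed
qed

lemma gadget_A_apex_on_lattice:
  assumes "i < m" "i \<in> X"
  shows "on_lattice (GadgetA i 2)"
proof -
  define q where "q = 2 * int i + 4"
  have pos: "pos X Y (GadgetA i 0) = (q, 2)" "pos X Y (GadgetA i 1) = (q + 1, 2)"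
    "pos X Y (GadgetA i 2) = (q, 3)"
    using assms(2) unfolding q_def by simp_all
  have cells: "(q + 1, 0) \<in> frame_cells m T" "(q, 1) \<in> frame_cells m T" "(q + 1, 1) \<in> frame_cells m T"
    using assms(1) unfolding q_def frame_cells_def by auto
  have frame: "on_lattice (Frame (q + 1, 0))" "on_lattice (Frame (q, 1))" "on_lattice (Frame (q + 1, 1))"
    using assms(1) unfolding q_def by (auto intro: frame_rows_on_lattice)
  have g0: "on_lattice (GadgetA i 0)"
    by (rule on_lattice_reflect[where a = "Frame (q + 1, 0)" and b = "Frame (q, 1)" and c = "Frame (q + 1, 1)"])
      (use assms cells frame pos in \<open>simp_all add: framework_def del: pos.simps(2, 3)\<close>)
  have g1: "on_lattice (GadgetA i 1)"
    by (rule on_lattice_reflect[where a = "Frame (q, 1)" and b = "GadgetA i 0" and c = "Frame (q + 1, 1)"])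
      (use assms cells frame pos g0 in \<open>simp_all add: framework_def del: pos.simps(2, 3)\<close>)
  show ?thesis
    by (rule on_lattice_reflect[where a = "Frame (q + 1, 1)" and b = "GadgetA i 0" and c = "GadgetA i 1"])
      (use assms cells frame pos g0 g1 in \<open>simp_all add: framework_def del: pos.simps(2, 3)\<close>)
qed

lemma gadget_B_apex_on_lattice:
  assumes "i < m" "i \<notin> Y"
  shows "on_lattice (GadgetB i 2)"
proof -
  define q where "q = 2 * int i + 4"
  have pos: "pos X Y (GadgetB i 0) = (q, 4)" "pos X Y (GadgetB i 1) = (q - 1, 4)"
    "pos X Y (GadgetB i 2) = (q, 3)"
    using assms(2) unfolding q_def by simp_all
  have cells: "(q - 1, 6) \<in> frame_cells m T" "(q, 5) \<in> frame_cells m T" "(q - 1, 5) \<in> frame_cells m T"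
    using assms(1) unfolding q_def frame_cells_def by auto
  have frame: "on_lattice (Frame (q - 1, 6))" "on_lattice (Frame (q, 5))" "on_lattice (Frame (q - 1, 5))"
    using assms(1) unfolding q_def by (auto intro: frame_rows_on_lattice)
  have g0: "on_lattice (GadgetB i 0)"
    by (rule on_lattice_reflect[where a = "Frame (q - 1, 6)" and b = "Frame (q, 5)" and c = "Frame (q - 1, 5)"])
      (use assms cells frame pos in \<open>simp_all add: framework_def del: pos.simps(2, 3)\<close>)
  have g1: "on_lattice (GadgetB i 1)"
    by (rule on_lattice_reflect[where a = "Frame (q, 5)" and b = "GadgetB i 0" and c = "Frame (q - 1, 5)"])
      (use assms cells frame pos g0 in \<open>simp_all add: framework_def del: pos.simps(2, 3)\<close>)
  show ?thesis
    by (rule on_lattice_reflect[where a = "Frame (q - 1, 5)" and b = "GadgetB i 0" and c = "GadgetB i 1"])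
      (use assms cells frame pos g0 g1 in \<open>simp_all add: framework_def del: pos.simps(2, 3)\<close>)
qed

lemma realisation_forces_mem_Y: "i < m \<Longrightarrow> i \<in> X \<Longrightarrow> i \<in> Y"
proof (rule ccontr)
  assume i: "i < m" "i \<in> X" "i \<notin> Y"
  then have "p (GadgetA i 2) = p (GadgetB i 2)"
    using gadget_A_apex_on_lattice gadget_B_apex_on_lattice unfolding on_lattice_def by simp
  then show False
    using inj i(1) by (auto dest: inj_onD)
qed

end

lemma framework_not_realisable:
  assumes "i < m" "i \<in> X" "i \<notin> Y"
  shows "\<nexists>q :: role \<Rightarrow> real^2. inj_on q (roles m T) \<and>
    (\<forall>r\<in>roles m T. \<forall>r'\<in>roles m T. framework X Y r r' \<longleftrightarrow> dist (q r) (q r') = 1)"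
proof
  assume "\<exists>q :: role \<Rightarrow> real^2. inj_on q (roles m T) \<and>
    (\<forall>r\<in>roles m T. \<forall>r'\<in>roles m T. framework X Y r r' \<longleftrightarrow> dist (q r) (q r') = 1)"
  then obtain q :: "role \<Rightarrow> real^2" where "unit_realisation m T X Y q"
    unfolding unit_realisation_def by blast
  then show False
    using unit_realisation.realisation_forces_mem_Y assms by blast
qed

lemma framework_admissible:
  assumes "k \<ge> 1" "bij_betw h {1..n} (roles m T)"
  shows "admissible k {1..n} (pullback {1..n} h (framework X Y))"
proof (rule admissible_pullback[OF assms])
  show "symp (framework X Y)"
    using framework_sym by (blast intro: sympI)
  show "Frame (0, 0) \<in> roles m T"
    by (simp add: frame_cells_def)
  show "\<not> framework X Y r r" for r
    by (rule framework_irrefl)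
  show "(framework_on m T X Y)\<^sup>*\<^sup>* r (Frame (0, 0))" if "r \<in> roles m T" for r
    using that by (rule framework_connected)
qed

lemma border_certificates_differ:
  assumes pls: "pls_unit_distance k D P" and "k \<ge> 1"
    and h: "bij_betw h {1..n} (roles m T)"
    and i: "i < m" "i \<in> X" "i \<notin> Y"
  shows "\<exists>u\<in>{1..n}. h u \<in> border \<and>
    P {1..n} (pullback {1..n} h (framework X X)) u \<noteq> P {1..n} (pullback {1..n} h (framework Y Y)) u"
proof -
  let ?G = "\<lambda>X Y. pullback {1..n} h (framework X Y)"
  let ?A = "{u \<in> {1..n}. side_A (h u)}"
  have "\<exists>v u. ?G X Y v u \<and> (v \<in> ?A) \<noteq> (u \<in> ?A) \<and> P {1..n} (?G X X) u \<noteq> P {1..n} (?G Y Y) u"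
  proof (rule pls_crossing_certificates_differ[OF pls])
    show "admissible k {1..n} (?G X X)" "admissible k {1..n} (?G Y Y)" "admissible k {1..n} (?G X Y)"
      by (rule framework_admissible[OF \<open>k \<ge> 1\<close> h])+
    show "unit_distance_graph {1..n} (?G X X)" "unit_distance_graph {1..n} (?G Y Y)"
      unfolding unit_distance_graph_pullback[OF h] by (rule framework_diagonal_realisation)+
    show "\<not> unit_distance_graph {1..n} (?G X Y)"
      unfolding unit_distance_graph_pullback[OF h] by (rule framework_not_realisable[OF i])
    show "?G X Y v u \<longleftrightarrow> ?G X X v u" if "v \<in> ?A" for v u
      using that framework_side_A[of "h v" X Y "h u"] unfolding pullback_def by auto
    show "?G X Y v u \<longleftrightarrow> ?G Y Y v u" if "v \<notin> ?A" for v u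
      using that framework_side_B[of "h v" X Y "h u"] unfolding pullback_def by auto
  qed
  then obtain v u where edge: "?G X Y v u" and sides: "(v \<in> ?A) \<noteq> (u \<in> ?A)"
    and differ: "P {1..n} (?G X X) u \<noteq> P {1..n} (?G Y Y) u"
    by blast
  have "u \<in> {1..n}" "v \<in> {1..n}" "framework X Y (h v) (h u)"
    using edge unfolding pullback_def by auto
  moreover from this have "side_A (h v) \<noteq> side_A (h u)"
    using sides by auto
  ultimately have "h u \<in> border"
    using bij_betwE[OF h] by (blast intro: framework_cross_edge_border)
  with \<open>u \<in> {1..n}\<close> differ show ?thesis
    by blast
qed

lemma border_preimage:
  assumes "bij_betw h V (roles m T)"
  shows "card {u \<in> V. h u \<in> border} \<le> 4" "{u \<in> V. h u \<in> border} \<noteq> {}"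
proof -
  have "border \<subseteq> roles m T"
    by (auto simp: border_def frame_cells_def)
  then have "border \<subseteq> h ` V"
    using assms by (simp add: bij_betw_def)
  then have image: "h ` {u \<in> V. h u \<in> border} = border"
    by blast
  have "inj_on h {u \<in> V. h u \<in> border}"
    using assms unfolding bij_betw_def by (blast intro: inj_on_subset)
  moreover have "card border \<le> 4"
    unfolding border_def by (rule order.trans[OF card_image_le]) (auto simp: card_cartesian_product)
  ultimately show "card {u \<in> V. h u \<in> border} \<le> 4"
    using image by (metis card_image)
  have "border \<noteq> {}"
    by (simp add: border_def)
  then show "{u \<in> V. h u \<in> border} \<noteq> {}"
    using image by blast
qed

lemma long_border_certificate:
  assumes pls: "pls_unit_distance k D P" and "k \<ge> 1"
    and h: "bij_betw h {1..n} (roles m T)" and "4 * Suc L \<le> m"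
  shows "\<exists>X. \<exists>u\<in>{1..n}. h u \<in> border \<and> L < length (P {1..n} (pullback {1..n} h (framework X X)) u)"
proof (rule ccontr)
  let ?G = "\<lambda>X. pullback {1..n} h (framework X X)"
  define B where "B = {u \<in> {1..n}. h u \<in> border}"
  assume "\<not> ?thesis"
  then have short: "length (P {1..n} (?G X) u) \<le> L" if "u \<in> B" for X u
    using that unfolding B_def by (auto simp: not_less)
  have "card B * Suc L \<le> 4 * Suc L"
    using border_preimage(1)[OF h] unfolding B_def by (rule mult_le_mono1)
  with \<open>4 * Suc L \<le> m\<close> have "card B * Suc L \<le> card {..<m}"
    by simp
  moreover have "finite B" "B \<noteq> {}"
    using border_preimage(2)[OF h] unfolding B_def by simp_all
  ultimately obtain X Y where "X \<subseteq> {..<m}" "Y \<subseteq> {..<m}" "X \<noteq> Y"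
    and agree: "\<forall>u\<in>B. P {1..n} (?G X) u = P {1..n} (?G Y) u"
    using short_words_on_subsets_collide[where M = "{..<m}" and B = B and L = L
        and c = "\<lambda>X. P {1..n} (?G X)"] short finite_lessThan by blast
  have included: "Z \<subseteq> W"
    if "Z \<subseteq> {..<m}" "\<forall>u\<in>B. P {1..n} (?G Z) u = P {1..n} (?G W) u" for Z W
  proof
    fix i assume "i \<in> Z"
    show "i \<in> W"
    proof (rule ccontr)
      assume "i \<notin> W"
      moreover have "i < m"
        using \<open>i \<in> Z\<close> that(1) by auto
      ultimately obtain u where "u \<in> B" "P {1..n} (?G Z) u \<noteq> P {1..n} (?G W) u"
        using border_certificates_differ[OF pls \<open>k \<ge> 1\<close> h, where i = i and X = Z and Y = W]
          \<open>i \<in> Z\<close> unfolding B_def by blast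
      with that(2) show False
        by blast
    qed
  qed
  have "X \<subseteq> Y" "Y \<subseteq> X"
    using included[of X Y] included[of Y X] \<open>X \<subseteq> {..<m}\<close> \<open>Y \<subseteq> {..<m}\<close> agree by auto
  with \<open>X \<noteq> Y\<close> show False
    by blast
qed

theorem theorem5p4:
  assumes "k \<ge> 1"
  shows "\<exists>C::real. C > 0 \<and> (\<exists>n0::nat. \<forall>(D::verifier) (P::prover) (n::nat).
           pls_unit_distance k D P \<longrightarrow> n \<ge> n0 \<longrightarrow>
           (\<exists>V E. admissible k V E \<and> card V = n \<and> unit_distance_graph V E \<and>
                  (\<exists>v\<in>V. real (length (P V E v)) \<ge> C * real n)))"
proof (intro exI[of _ "1 / 100"] conjI exI[of _ "1000 :: nat"] allI impI)
  fix D :: verifier and P :: prover and n :: nat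
  assume pls: "pls_unit_distance k D P" and "1000 \<le> n"
  define m where "m = (n - 22) div 14"
  define T where "T = (n - 22) mod 14"
  define L where "L = n div 100"
  have "card (roles m T) = n"
    using \<open>1000 \<le> n\<close> unfolding card_roles m_def T_def by simp
  then obtain h where h: "bij_betw h {1..n} (roles m T)"
    using ex_bij_betw_nat_finite_1[OF finite_roles] by metis
  have L: "L * 100 + n mod 100 = n" "n mod 100 < 100"
    unfolding L_def by simp_all
  have "m * 14 + T + 22 = n" "T < 14"
    using \<open>1000 \<le> n\<close> unfolding m_def T_def by simp_all
  with L \<open>1000 \<le> n\<close> have "4 * L + 4 \<le> m"
    by linarith
  then have "4 * Suc L \<le> m"
    by simp
  then obtain X u where "u \<in> {1..n}"
    and long: "L < length (P {1..n} (pullback {1..n} h (framework X X)) u)"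
    using long_border_certificate[OF pls assms h] by blast
  have "admissible k {1..n} (pullback {1..n} h (framework X X))"
    by (rule framework_admissible[OF assms h])
  moreover have "unit_distance_graph {1..n} (pullback {1..n} h (framework X X))"
    unfolding unit_distance_graph_pullback[OF h] by (rule framework_diagonal_realisation)
  moreover have "1 / 100 * real n \<le> real (length (P {1..n} (pullback {1..n} h (framework X X)) u))"
    using long L by linarith
  moreover have "card {1..n} = n"
    by simp
  ultimately show "\<exists>V E. admissible k V E \<and> card V = n \<and> unit_distance_graph V E \<and>
      (\<exists>v\<in>V. real (length (P V E v)) \<ge> 1 / 100 * real n)"
    using \<open>u \<in> {1..n}\<close> by blast
qed simp

end
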